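(* Let $b>0$. For $R>0$ define, for $r>0$, \[ \begin{aligned} \underline u_{\rm out}(r) &= Lr^{-m} - br^{-l} \log \frac{r}{R},\\ \underline v_{\rm out}(r) &= m(n-2-m)Lr^{-m-2} +\Big[- l(n-2-l) \log \frac{r}{R} + (n-2-2l)\Big]br^{-l-2},\\ \underline w_{\rm out}(r) &= m(m+2)(n-2-m)(n-4-m)Lr^{-m-4} - l(l+2)(n-2-l)(n-4-l)br^{-l-4} \log \frac{r}{R} \\ &\qquad + (n-2-2l)(l+2)(n-4-l) b r^{-l-4}, \end{aligned} \] and \[ \underline r_1 = \sup\{ r>0 : \underline u_{\rm out}(r) \leqslant 0 \},\quad \underline r_2 = \sup\{ r>0 : \underline v_{\rm out}(r) \leqslant 0 \},\quad \underline r_3 = \sup\{ r>0 : \underline w_{\rm out}(r) \leqslant 0 \}. \] Then there exists $R>0$ such that $\underline r_1,\underline r_2,\underline r_3$ are well defined and \[ R<\underline r_1<\underline r_2<\underline r_3<+\infty . \]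
   Context: Let $n\geqslant 15$ and $p=p_{\mathsf{JL}}(6,n)$, where $p_{\mathsf{JL}}(6,n)=\frac{(n+4)\sqrt{3} - \sqrt{\sqrt[3]{K_0+K_1}+ \sqrt[3]{K_0-K_1} + 3n^2+32 }}{(n-8)\sqrt{3} - \sqrt{\sqrt[3]{K_0+K_1} + \sqrt[3]{K_0-K_1} + 3n^2+32 }}$ with $2K_0 =-27n^6+324 n^5-756n^4-2592 n^3 + 25776 n^2 +5184 n -23744$, $2K_1 = \sqrt{(2K_0)^2 - 4(192n^2+256)^3}$. Let $m=6/(p-1)$, $L=\big(m(m+2)(m+4)(n-2-m)(n-4-m)(n-6-m)\big)^{1/(p-1)}$, let $\lambda_3$ be the smallest positive root of $P(\lambda)=(m+\lambda)(m+\lambda+2)(m+\lambda+4)(n-2-m-\lambda)(n-4-m-\lambda)(n-6-m-\lambda)-pL^{p-1}$, and set $l=m+\lambda_3$. *)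

theory Defs
  imports Complex_Main
begin

definition K0 :: "real \<Rightarrow> real" where
  "K0 n = (-27*n^6 + 324*n^5 - 756*n^4 - 2592*n^3 + 25776*n^2 + 5184*n - 23744) / 2"

definition K1 :: "real \<Rightarrow> real" where
  "K1 n = sqrt ((2 * K0 n)^2 - 4 * (192*n^2 + 256)^3) / 2"

(* root 3 is the real cube root (odd root, sign-preserving) *)
definition pJL6 :: "real \<Rightarrow> real" where
  "pJL6 n =
     ((n + 4) * sqrt 3 - sqrt (root 3 (K0 n + K1 n) + root 3 (K0 n - K1 n) + 3*n^2 + 32)) /
     ((n - 8) * sqrt 3 - sqrt (root 3 (K0 n + K1 n) + root 3 (K0 n - K1 n) + 3*n^2 + 32))"

definition mexp :: "real \<Rightarrow> real" where
  "mexp n = 6 / (pJL6 n - 1)"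

definition Lconst :: "real \<Rightarrow> real" where
  "Lconst n = (let m = mexp n in
     (m*(m+2)*(m+4)*(n-2-m)*(n-4-m)*(n-6-m)) powr (1 / (pJL6 n - 1)))"

definition Ppoly :: "real \<Rightarrow> real \<Rightarrow> real" where
  "Ppoly n x = (let m = mexp n in
     (m+x)*(m+x+2)*(m+x+4)*(n-2-m-x)*(n-4-m-x)*(n-6-m-x)
       - pJL6 n * Lconst n powr (pJL6 n - 1))"

definition lam3 :: "real \<Rightarrow> real" where
  "lam3 n = Inf {x. x > 0 \<and> Ppoly n x = 0}"

definition lexp :: "real \<Rightarrow> real" where
  "lexp n = mexp n + lam3 n"

definition u_out :: "real \<Rightarrow> real \<Rightarrow> real \<Rightarrow> real \<Rightarrow> real" where
  "u_out n b R r = (let m = mexp n; l = lexp n; L = Lconst n in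
     L * r powr (-m) - b * r powr (-l) * ln (r / R))"

definition v_out :: "real \<Rightarrow> real \<Rightarrow> real \<Rightarrow> real \<Rightarrow> real" where
  "v_out n b R r = (let m = mexp n; l = lexp n; L = Lconst n in
     m*(n-2-m)*L * r powr (-m-2)
     + (- l*(n-2-l) * ln (r / R) + (n-2-2*l)) * b * r powr (-l-2))"

definition w_out :: "real \<Rightarrow> real \<Rightarrow> real \<Rightarrow> real \<Rightarrow> real" where
  "w_out n b R r = (let m = mexp n; l = lexp n; L = Lconst n in
     m*(m+2)*(n-2-m)*(n-4-m)*L * r powr (-m-4)
     - l*(l+2)*(n-2-l)*(n-4-l)*b * r powr (-l-4) * ln (r / R)
     + (n-2-2*l)*(l+2)*(n-4-l)*b * r powr (-l-4))"

end

theory Submission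
  imports Defs "HOL-Real_Asymp.Real_Asymp"
begin

text \<open>Writing \<open>p = (n + 4 - s) / (n - 8 - s)\<close>, Cardano's formula shows that \<open>s\<close> satisfies
  \<open>((n+4)\<^sup>2 - s\<^sup>2) ((n-4)\<^sup>2 - s\<^sup>2) (n\<^sup>2 - s\<^sup>2) = ((n-6)(n-2)(n+2))\<^sup>2\<close>. This says that \<open>p\<close> times the
  sextic \<open>y (y+2) (y+4) (n-2-y) (n-4-y) (n-6-y)\<close> at \<open>y = m\<close> equals its value at the centre of
  symmetry \<open>(n-6)/2\<close>, where it is strictly maximal; hence \<open>l = (n-6)/2\<close>.

  With \<open>k = l - m > 0\<close> and \<open>s = ln (r/R)\<close>, \<open>u \<le> 0\<close> means \<open>L r\<^sup>k \<le> b s\<close>; this forces \<open>v < 0\<close> once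
  \<open>k (k+4) s > 4\<close>, and \<open>v \<le> 0\<close> always forces \<open>w < 0\<close>. Choosing \<open>R\<close> so that \<open>u\<close> vanishes at a radius
  with large \<open>s\<close>, each supremum is attained, the next function is negative there, and by continuity
  the next supremum lies strictly further out.\<close>

definition depressed_cubic :: "real \<Rightarrow> real \<Rightarrow> real \<Rightarrow> real" where
  "depressed_cubic Q K y = y^3 - 3*Q*y - 2*K"

lemma depressed_cubic_Cardano:
  fixes Q K :: real
  assumes "0 \<le> Q" and "Q^3 \<le> K^2"
  shows "depressed_cubic Q K (root 3 (K + sqrt (K^2 - Q^3)) + root 3 (K - sqrt (K^2 - Q^3))) = 0"
proof -
  define d where "d = sqrt (K^2 - Q^3)"
  define a where "a = root 3 (K + d)"
  define c where "c = root 3 (K - d)"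
  have "d^2 = K^2 - Q^3" unfolding d_def using assms(2) by simp
  then have "(K + d) * (K - d) = Q^3" by (simp add: algebra_simps power2_eq_square)
  then have ac: "a * c = Q"
    unfolding a_def c_def real_root_mult[symmetric] using assms(1) by (simp add: real_root_power_cancel)
  have "a^3 = K + d" "c^3 = K - d" unfolding a_def c_def by (simp_all add: odd_real_root_pow)
  then have "depressed_cubic Q K (a + c) = 3 * (a*c - Q) * (a + c)"
    unfolding depressed_cubic_def by (simp add: algebra_simps power3_eq_cube)
  with ac have "depressed_cubic Q K (a + c) = 0" by simp
  then show ?thesis unfolding a_def c_def d_def .
qed

lemma depressed_cubic_sign:
  fixes Q K c y :: real
  assumes root: "depressed_cubic Q K c = 0" and y: "4*Q < y^2"
  shows "0 < depressed_cubic Q K y \<longleftrightarrow> c < y" and "depressed_cubic Q K y < 0 \<longleftrightarrow> y < c"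
proof -
  have "depressed_cubic Q K y = (y - c) * ((c + y/2)^2 + 3/4*y^2 - 3*Q)"
    using root unfolding depressed_cubic_def by (simp add: algebra_simps power2_eq_square power3_eq_cube)
  moreover have "0 < (c + y/2)^2 + 3/4*y^2 - 3*Q"
    using y zero_le_power2[of "c + y/2"] by linarith
  ultimately show "0 < depressed_cubic Q K y \<longleftrightarrow> c < y" "depressed_cubic Q K y < 0 \<longleftrightarrow> y < c"
    by (simp_all add: zero_less_mult_iff mult_less_0_iff)
qed

lemma K1_eq: "K1 x = sqrt ((K0 x)^2 - (192*x^2 + 256)^3)"
proof -
  have "K1 x = sqrt (2^2 * ((K0 x)^2 - (192*x^2 + 256)^3)) / 2"
    unfolding K1_def by (simp add: power_mult_distrib right_diff_distrib)
  then show ?thesis unfolding real_sqrt_mult real_sqrt_abs by simp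
qed

lemma K0_times_2: "2 * K0 x = -27*x^6 + 324*x^5 - 756*x^4 - 2592*x^3 + 25776*x^2 + 5184*x - 23744"
  unfolding K0_def by simp

text \<open>Substituting \<open>x = 15 + k\<close> leaves polynomials in \<open>k\<close> with positive coefficients.\<close>

lemma K0_squared_gt:
  fixes x :: real assumes "15 \<le> x"
  shows "(192*x^2 + 256)^3 < (K0 x)^2"
proof -
  obtain k where k: "0 \<le> k" and x: "x = k + 15" using assms by (metis le_add_diff_inverse2 diff_ge_0_iff_ge)
  have "(2 * K0 x)^2 - 4 * (192*x^2 + 256)^3 = 10214160759983817 + 10585461850409628*k + 4894534148604354*k^2 + 1347076448060364*k^3 + 246965545626615*k^4 + 31863611628216*k^5 + 2971699904988*k^6 + 202081266936*k^7 + 9951685191*k^8 + 346289580*k^9 + 8084610*k^10 + 113724*k^11 + 729*k^12"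
    unfolding K0_times_2 x by (simp add: eval_nat_numeral algebra_simps)
  also have "\<dots> > 0" using k by (simp add: add_pos_nonneg)
  finally show ?thesis by simp
qed

lemma depressed_cubic_K0_pos:
  fixes x :: real assumes "15 \<le> x"
  shows "0 < depressed_cubic (192*x^2 + 256) (K0 x) (160 - 48*x)"
proof -
  obtain k where k: "0 \<le> k" and x: "x = k + 15" using assms by (metis le_add_diff_inverse2 diff_ge_0_iff_ge)
  have "depressed_cubic (192*x^2 + 256) (K0 x) (160 - 48*x) = 66339 + 22959450*k + 7960869*k^2 + 1058508*k^3 + 67581*k^4 + 2106*k^5 + 27*k^6"
    unfolding depressed_cubic_def K0_times_2 x by (simp add: eval_nat_numeral algebra_simps)
  also have "\<dots> > 0" using k by (simp add: add_pos_nonneg)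
  finally show ?thesis .
qed

lemma depressed_cubic_K0_neg:
  fixes x :: real assumes "15 \<le> x"
  shows "depressed_cubic (192*x^2 + 256) (K0 x) (-3*x^2 - 32) < 0"
proof -
  obtain k where k: "0 \<le> k" and x: "x = k + 15" using assms by (metis le_add_diff_inverse2 diff_ge_0_iff_ge)
  have "- depressed_cubic (192*x^2 + 256) (K0 x) (-3*x^2 - 32) = 158546808 + 58825764*k + 8645616*k^2 + 629208*k^3 + 22680*k^4 + 324*k^5"
    unfolding depressed_cubic_def K0_times_2 x by (simp add: eval_nat_numeral algebra_simps)
  also have "\<dots> > 0" using k by (simp add: add_pos_nonneg)
  finally show ?thesis by simp
qed

lemma depressed_cubic_K0_shift:
  "depressed_cubic (192*x^2 + 256) (K0 x) (3*z - 3*x^2 - 32) =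
     27 * (((x-6)*(x-2)*(x+2))^2 - ((x+4)^2 - z) * ((x-4)^2 - z) * (x^2 - z))"
  unfolding depressed_cubic_def K0_times_2 by (simp add: algebra_simps eval_nat_numeral)

lemma pJL6_eq:
  fixes x :: real assumes x: "15 \<le> x"
  obtains s where "0 < s" and "s < x - 8" and "pJL6 x = (x + 4 - s) / (x - 8 - s)"
    and "((x+4)^2 - s^2) * ((x-4)^2 - s^2) * (x^2 - s^2) = ((x-6)*(x-2)*(x+2))^2"
proof -
  define Q where "Q = 192*x^2 + 256"
  define c where "c = root 3 (K0 x + K1 x) + root 3 (K0 x - K1 x)"
  have root: "depressed_cubic Q (K0 x) c = 0"
    unfolding c_def K1_eq Q_def using K0_squared_gt[OF x] by (intro depressed_cubic_Cardano) auto
  have "(160 - 48*x)^2 - 4*Q = 1536 * (x * (x - 10) + 16)"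
    "(-3*x^2 - 32)^2 - 4*Q = 9 * x^2 * ((x - 8) * (x + 8))"
    unfolding Q_def by (simp_all add: power2_eq_square algebra_simps)
  moreover have "0 < x * (x - 10)" "0 < 9 * x^2 * ((x - 8) * (x + 8))" using x by simp_all
  ultimately have "4*Q < (160 - 48*x)^2" "4*Q < (-3*x^2 - 32)^2" by simp_all
  then have c: "-3*x^2 - 32 < c" "c < 160 - 48*x"
    using depressed_cubic_sign[OF root] depressed_cubic_K0_pos[OF x] depressed_cubic_K0_neg[OF x]
    unfolding Q_def by blast+
  define s where "s = sqrt ((c + 3*x^2 + 32) / 3)"
  have "0 < (c + 3*x^2 + 32) / 3" using c by simp
  then have s0: "0 < s" and s2: "s^2 = (c + 3*x^2 + 32) / 3" unfolding s_def by simp_all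
  have "(x - 8)^2 - s^2 = (160 - 48*x - c) / 3" unfolding s2 by (simp add: power2_eq_square field_simps)
  then have "s^2 < (x - 8)^2" using c(2) by simp
  then have s1: "s < x - 8" using x s0 by (simp add: power_less_imp_less_base)
  have "sqrt (root 3 (K0 x + K1 x) + root 3 (K0 x - K1 x) + 3*x^2 + 32) = sqrt 3 * s"
    unfolding s_def c_def[symmetric] real_sqrt_mult[symmetric] by simp
  then have "pJL6 x = ((x + 4 - s) * sqrt 3) / ((x - 8 - s) * sqrt 3)"
    unfolding pJL6_def by (simp add: algebra_simps)
  then have "pJL6 x = (x + 4 - s) / (x - 8 - s)" by simp
  moreover have "3 * s^2 - 3*x^2 - 32 = c" unfolding s2 by (simp add: field_simps)
  then have "((x+4)^2 - s^2) * ((x-4)^2 - s^2) * (x^2 - s^2) = ((x-6)*(x-2)*(x+2))^2"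
    using root depressed_cubic_K0_shift[of x "s^2"] unfolding Q_def by simp
  ultimately show ?thesis using that s0 s1 by simp
qed

definition sextic :: "real \<Rightarrow> real \<Rightarrow> real" where
  "sextic x y = y * (y+2) * (y+4) * (x-2-y) * (x-4-y) * (x-6-y)"

lemma sextic_less_midpoint:
  fixes x y :: real assumes "0 < y" and "y < (x-6)/2"
  shows "sextic x y < sextic x ((x-6)/2)"
proof -
  define a where "a = (x-6)/2"
  define d where "d = a - y"
  have d: "0 < d" "d < a" using assms unfolding a_def d_def by linarith+
  have "\<And>y. sextic x y = (a^2 - (a-y)^2) * ((a+2)^2 - (a-y)^2) * ((a+4)^2 - (a-y)^2)"
    unfolding sextic_def a_def by (simp add: field_simps power2_eq_square)
  then have sy: "sextic x y = (a^2 - d^2) * ((a+2)^2 - d^2) * ((a+4)^2 - d^2)"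
    and sa: "sextic x a = a^2 * (a+2)^2 * (a+4)^2"
    unfolding d_def by simp_all
  have "0 < d^2" "d^2 < a^2" "d^2 < (a+2)^2" "d^2 < (a+4)^2"
    using d by (auto intro!: power_strict_mono)
  then have "(a^2 - d^2) * ((a+2)^2 - d^2) < a^2 * (a+2)^2"
    by (intro mult_strict_mono) auto
  with d \<open>d^2 < (a+2)^2\<close> \<open>d^2 < (a+4)^2\<close> \<open>d^2 < a^2\<close>
  have "sextic x y < sextic x a"
    unfolding sy sa by (intro mult_strict_mono) auto
  then show ?thesis unfolding a_def .
qed

lemma pJL6_mexp:
  fixes x :: real assumes x: "15 \<le> x"
  shows "1 < pJL6 x" and "0 < mexp x" and "mexp x < (x-6)/2"
    and "pJL6 x * sextic x (mexp x) = sextic x ((x-6)/2)"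
proof -
  obtain s where s: "0 < s" "s < x - 8" and p: "pJL6 x = (x + 4 - s) / (x - 8 - s)"
    and id: "((x+4)^2 - s^2) * ((x-4)^2 - s^2) * (x^2 - s^2) = ((x-6)*(x-2)*(x+2))^2"
    using pJL6_eq[OF x] .
  have p1: "pJL6 x - 1 = 12 / (x - 8 - s)" unfolding p using s by (simp add: field_simps)
  moreover have "0 < 12 / (x - 8 - s)" using s by simp
  ultimately show "1 < pJL6 x" by linarith
  have m: "mexp x = (x - 8 - s) / 2" unfolding mexp_def p1 using s by simp
  show "0 < mexp x" "mexp x < (x-6)/2" unfolding m using s by simp_all
  have "pJL6 x * sextic x (mexp x) = ((x+4)^2 - s^2) * ((x-4)^2 - s^2) * (x^2 - s^2) / 64"
    unfolding p m sextic_def using s by (simp add: field_simps power2_eq_square)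
  also have "\<dots> = sextic x ((x-6)/2)" unfolding id sextic_def by (simp add: field_simps power2_eq_square)
  finally show "pJL6 x * sextic x (mexp x) = sextic x ((x-6)/2)" .
qed

lemma Lconst_pos_powr:
  fixes x :: real assumes x: "15 \<le> x"
  shows "0 < Lconst x" and "Lconst x powr (pJL6 x - 1) = sextic x (mexp x)"
proof -
  have "0 < sextic x (mexp x)" unfolding sextic_def using pJL6_mexp[OF x] x by simp
  moreover have L: "Lconst x = sextic x (mexp x) powr (1 / (pJL6 x - 1))"
    unfolding Lconst_def Let_def sextic_def ..
  ultimately show "0 < Lconst x" "Lconst x powr (pJL6 x - 1) = sextic x (mexp x)"
    unfolding L powr_powr using pJL6_mexp(1)[OF x] by simp_all
qed

lemma lexp_eq:
  fixes x :: real assumes x: "15 \<le> x"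
  shows "lexp x = (x-6)/2"
proof -
  define m where "m = mexp x"
  have P: "Ppoly x t = sextic x (m + t) - sextic x ((x-6)/2)" for t
    unfolding Ppoly_def Let_def m_def Lconst_pos_powr(2)[OF x] pJL6_mexp(4)[OF x, symmetric]
    by (simp add: sextic_def algebra_simps)
  have "(x-6)/2 - m \<in> {t. 0 < t \<and> Ppoly x t = 0}"
    unfolding P using pJL6_mexp(3)[OF x] m_def by simp
  moreover have "(x-6)/2 - m \<le> t" if "t \<in> {t. 0 < t \<and> Ppoly x t = 0}" for t
  proof (rule ccontr)
    assume "\<not> (x-6)/2 - m \<le> t"
    moreover have "0 < m" "0 < t" using that pJL6_mexp(2)[OF x] unfolding m_def by simp_all
    ultimately have "sextic x (m + t) < sextic x ((x-6)/2)"
      by (intro sextic_less_midpoint) linarith+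
    with that show False unfolding P by simp
  qed
  ultimately have "lam3 x = (x-6)/2 - m" unfolding lam3_def by (rule cInf_eq_minimum)
  then show ?thesis unfolding lexp_def m_def by simp
qed

definition pos_sublevel :: "(real \<Rightarrow> real) \<Rightarrow> real set" where
  "pos_sublevel f = {r. 0 < r \<and> f r \<le> 0}"

lemma Sup_pos_sublevel_mem:
  assumes cont: "\<And>r. 0 < r \<Longrightarrow> isCont f r"
    and ne: "pos_sublevel f \<noteq> {}" and bdd: "bdd_above (pos_sublevel f)"
  shows "Sup (pos_sublevel f) \<in> pos_sublevel f"
proof -
  define S where "S = pos_sublevel f"
  obtain r0 where "r0 \<in> S" using ne unfolding S_def by blast
  then have S0: "0 < Sup S" using bdd cSup_upper[of r0 S] unfolding S_def pos_sublevel_def by fastforce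
  have "f (Sup S) \<le> 0"
  proof (rule ccontr)
    assume "\<not> f (Sup S) \<le> 0"
    then have "\<forall>\<^sub>F r in at (Sup S). 0 < f r"
      using cont[OF S0] by (metis isCont_def order_tendstoD(1) not_le)
    then obtain d where d: "0 < d" "\<And>r. r \<noteq> Sup S \<Longrightarrow> dist r (Sup S) < d \<Longrightarrow> 0 < f r"
      unfolding eventually_at by blast
    obtain r where r: "r \<in> S" "Sup S - d < r"
      using less_cSup_iff[of S "Sup S - d"] ne bdd d(1) unfolding S_def by auto
    have "r \<le> Sup S" using r(1) bdd cSup_upper unfolding S_def by blast
    then have "0 < f r" using r(2) d \<open>\<not> f (Sup S) \<le> 0\<close> by (cases "r = Sup S") (auto simp: dist_real_def)
    with r(1) show False unfolding S_def pos_sublevel_def by simp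
  qed
  with S0 show ?thesis unfolding S_def pos_sublevel_def by simp
qed

lemma less_Sup_pos_sublevel:
  assumes cont: "isCont f a" and a: "0 < a" "f a < 0" and bdd: "bdd_above (pos_sublevel f)"
  shows "pos_sublevel f \<noteq> {}" and "a < Sup (pos_sublevel f)"
proof -
  have "\<forall>\<^sub>F r in at a. f r < 0"
    using cont a by (metis isCont_def order_tendstoD(2))
  then obtain d where d: "0 < d" "\<And>r. r \<noteq> a \<Longrightarrow> dist r a < d \<Longrightarrow> f r < 0"
    unfolding eventually_at by blast
  then have "f (a + d/2) < 0" by (intro d(2)) (auto simp: dist_real_def)
  then have "a + d/2 \<in> pos_sublevel f" using a d(1) unfolding pos_sublevel_def by simp
  then show "pos_sublevel f \<noteq> {}" and "a < Sup (pos_sublevel f)"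
    using bdd cSup_upper[of "a + d/2"] d(1) by fastforce+
qed

lemma bdd_above_pos_sublevel_powr_ln:
  fixes A B R c d k e :: real
  assumes "0 < A" "0 < k" "0 < R" and f: "\<And>r. f r = r powr e * (A * r powr k - B * (c * ln (r / R) - d))"
  shows "bdd_above (pos_sublevel f)"
proof -
  have "\<forall>\<^sub>F r in at_top. 0 < r powr e * (A * r powr k - B * (c * ln (r / R) - d))"
    using assms(1-3) by real_asymp
  then obtain N where N: "\<And>r. N \<le> r \<Longrightarrow> 0 < f r" unfolding f eventually_at_top_linorder by blast
  have "r \<le> N" if "r \<in> pos_sublevel f" for r
  proof (rule ccontr)
    assume "\<not> r \<le> N"
    with N have "0 < f r" by simp
    with that show False unfolding pos_sublevel_def by simp
  qed
  then show ?thesis by (rule bdd_aboveI)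
qed

text \<open>The functions \<open>u\<close>, \<open>v\<close>, \<open>w\<close> below are \<open>u_out\<close>, \<open>v_out\<close>, \<open>w_out\<close> with \<open>n = 2 l + 6\<close>.\<close>

locale outer_profile =
  fixes m l L b :: real
  assumes m_pos: "0 < m" and m_less_l: "m < l" and L_pos: "0 < L" and b_pos: "0 < b"
begin

definition u :: "real \<Rightarrow> real \<Rightarrow> real" where
  "u R r = L * r powr (-m) - b * r powr (-l) * ln (r / R)"

definition v :: "real \<Rightarrow> real \<Rightarrow> real" where
  "v R r = m*(2*l+4-m)*L * r powr (-m-2) + (- l*(l+4) * ln (r / R) + 4) * b * r powr (-l-2)"

definition w :: "real \<Rightarrow> real \<Rightarrow> real" where
  "w R r = m*(m+2)*(2*l+4-m)*(2*l+2-m)*L * r powr (-m-4)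
     - l*(l+2)*(l+4)*(l+2)*b * r powr (-l-4) * ln (r / R) + 4*(l+2)*(l+2)*b * r powr (-l-4)"

lemma u_eq: "u R r = r powr (-l) * (L * r powr (l-m) - b * ln (r / R))"
  unfolding u_def by (simp add: algebra_simps powr_add[symmetric])

lemma v_eq:
  "v R r = r powr (-l-2) * (m*(2*l+4-m) * L * r powr (l-m) - b * (l*(l+4) * ln (r / R) - 4))"
  unfolding v_def by (simp add: algebra_simps powr_add[symmetric])

lemma w_eq:
  "w R r = r powr (-l-4) *
     ((m+2)*(2*l+2-m) * (m*(2*l+4-m) * L * r powr (l-m)) - (l+2)^2 * (b * (l*(l+4) * ln (r / R) - 4)))"
proof -
  have "r powr (-m-4) = r powr (-l-4) * r powr (l-m)" by (simp add: powr_add[symmetric] algebra_simps)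
  then show ?thesis unfolding w_def by (simp add: algebra_simps power2_eq_square)
qed

lemma isCont_u: "0 < R \<Longrightarrow> 0 < r \<Longrightarrow> isCont (u R) r"
  and isCont_v: "0 < R \<Longrightarrow> 0 < r \<Longrightarrow> isCont (v R) r"
  and isCont_w: "0 < R \<Longrightarrow> 0 < r \<Longrightarrow> isCont (w R) r"
  unfolding u_def[abs_def] v_def[abs_def] w_def[abs_def] by (intro continuous_intros; simp)+

lemma bdd_above_pos_sublevel_u: "0 < R \<Longrightarrow> bdd_above (pos_sublevel (u R))"
  using m_less_l L_pos
  by (intro bdd_above_pos_sublevel_powr_ln[where A = L and B = b and c = 1 and d = 0 and e = "-l"
        and k = "l-m" and R = R])
    (simp_all add: u_eq)

lemma bdd_above_pos_sublevel_v: "0 < R \<Longrightarrow> bdd_above (pos_sublevel (v R))"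
  using m_pos m_less_l L_pos
  by (intro bdd_above_pos_sublevel_powr_ln[where A = "m*(2*l+4-m) * L" and B = b
        and c = "l*(l+4)" and d = 4 and e = "-l-2" and k = "l-m" and R = R])
    (simp_all add: v_eq)

lemma bdd_above_pos_sublevel_w: "0 < R \<Longrightarrow> bdd_above (pos_sublevel (w R))"
  using m_pos m_less_l L_pos
  by (intro bdd_above_pos_sublevel_powr_ln[where A = "(m+2)*(2*l+2-m) * (m*(2*l+4-m) * L)"
        and B = "(l+2)^2 * b" and c = "l*(l+4)" and d = 4 and e = "-l-4" and k = "l-m" and R = R])
    (simp_all add: w_eq mult.assoc)

lemma v_neg_if_u_nonpos:
  assumes "0 < r" "u R r \<le> 0" and far: "4 < (l-m)*(l-m+4) * ln (r / R)"
  shows "v R r < 0"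
proof -
  have "L * r powr (l-m) \<le> b * ln (r / R)"
    using assms(1,2) unfolding u_eq by (simp add: mult_le_0_iff)
  then have "m*(2*l+4-m) * L * r powr (l-m) \<le> m*(2*l+4-m) * (b * ln (r / R))"
    using m_pos m_less_l by (simp add: mult.assoc mult_left_mono)
  moreover have "b * (4 - (l-m)*(l-m+4) * ln (r / R)) < 0"
    using far b_pos by (simp add: mult_pos_neg)
  ultimately have "m*(2*l+4-m) * L * r powr (l-m) - b * (l*(l+4) * ln (r / R) - 4) < 0"
    by (simp add: algebra_simps)
  with assms(1) show ?thesis unfolding v_eq by (simp add: mult_pos_neg)
qed

lemma w_neg_if_v_nonpos:
  assumes "0 < r" "v R r \<le> 0"
  shows "w R r < 0"
proof -
  define A where "A = m*(2*l+4-m) * L * r powr (l-m)"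
  define B where "B = b * (l*(l+4) * ln (r / R) - 4)"
  have "0 < A" unfolding A_def using assms(1) m_pos m_less_l L_pos by simp
  moreover have "A \<le> B" using assms unfolding v_eq A_def B_def by (simp add: mult_le_0_iff)
  moreover have "0 < (m+2)*(2*l+2-m)" using m_pos m_less_l by simp
  ultimately have "(m+2)*(2*l+2-m) * A \<le> (m+2)*(2*l+2-m) * B" by (intro mult_left_mono) simp_all
  then have "(m+2)*(2*l+2-m) * A - (l+2)^2 * B \<le> ((m+2)*(2*l+2-m) - (l+2)^2) * B"
    by (simp add: algebra_simps)
  also have "\<dots> = - ((l-m)^2 * B)" by (simp add: algebra_simps power2_eq_square)
  also have "\<dots> < 0" using \<open>0 < A\<close> \<open>A \<le> B\<close> m_less_l by simp
  finally show ?thesis using assms(1) unfolding w_eq A_def B_def by (simp add: mult_pos_neg)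
qed

lemma u_root_at_distance:
  assumes "0 < S"
  shows "\<exists>R>0. u R (R * exp S) = 0"
proof -
  define \<rho> where "\<rho> = (b * S / L) powr (1 / (l-m))"
  have "0 < \<rho>" unfolding \<rho>_def using assms b_pos L_pos by simp
  moreover have "L * \<rho> powr (l-m) = b * S"
    unfolding \<rho>_def using assms b_pos L_pos m_less_l by (simp add: powr_powr)
  ultimately have "u (\<rho> / exp S) \<rho> = 0" unfolding u_eq by simp
  with \<open>0 < \<rho>\<close> show ?thesis by (intro exI[of _ "\<rho> / exp S"]) simp
qed

theorem Sup_pos_sublevels_increasing:
  "\<exists>R>0. pos_sublevel (u R) \<noteq> {} \<and> bdd_above (pos_sublevel (u R)) \<and>
     pos_sublevel (v R) \<noteq> {} \<and> bdd_above (pos_sublevel (v R)) \<and>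
     pos_sublevel (w R) \<noteq> {} \<and> bdd_above (pos_sublevel (w R)) \<and>
     R < Sup (pos_sublevel (u R)) \<and>
     Sup (pos_sublevel (u R)) < Sup (pos_sublevel (v R)) \<and>
     Sup (pos_sublevel (v R)) < Sup (pos_sublevel (w R))"
proof -
  define q where "q = (l-m)*(l-m+4)"
  define S where "S = 5 / q"
  have q: "0 < q" unfolding q_def using m_less_l by simp
  then have S: "0 < S" "4 < q * S" unfolding S_def by simp_all
  obtain R where R: "0 < R" and root: "u R (R * exp S) = 0" using u_root_at_distance[OF S(1)] by blast
  note bdd = bdd_above_pos_sublevel_u[OF R] bdd_above_pos_sublevel_v[OF R] bdd_above_pos_sublevel_w[OF R]
  define r1 where "r1 = Sup (pos_sublevel (u R))"
  define r2 where "r2 = Sup (pos_sublevel (v R))"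
  have "R * exp S \<in> pos_sublevel (u R)" unfolding pos_sublevel_def using R root by simp
  then have ne_u: "pos_sublevel (u R) \<noteq> {}" and "R * exp S \<le> r1"
    unfolding r1_def using bdd(1) by (auto intro: cSup_upper)
  moreover have "R < R * exp S" using R S(1) by simp
  ultimately have R_r1: "R < r1" by simp
  have r1: "0 < r1" "u R r1 \<le> 0"
    using Sup_pos_sublevel_mem[OF isCont_u[OF R] ne_u bdd(1)] unfolding r1_def pos_sublevel_def by auto
  have "S = ln (R * exp S / R)" using R by simp
  also have "\<dots> \<le> ln (r1 / R)" using R \<open>R * exp S \<le> r1\<close> by (intro ln_mono divide_right_mono) simp_all
  finally have "q * S \<le> q * ln (r1 / R)" using q by (simp add: mult_left_mono)
  then have "4 < q * ln (r1 / R)" using S(2) by linarith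
  then have "v R r1 < 0" using v_neg_if_u_nonpos r1 unfolding q_def by blast
  then have ne_v: "pos_sublevel (v R) \<noteq> {}" and r12: "r1 < r2"
    using less_Sup_pos_sublevel[OF isCont_v[OF R r1(1)] r1(1) _ bdd(2)] unfolding r2_def by auto
  have r2: "0 < r2" "v R r2 \<le> 0"
    using Sup_pos_sublevel_mem[OF isCont_v[OF R] ne_v bdd(2)] unfolding r2_def pos_sublevel_def by auto
  then have "w R r2 < 0" by (rule w_neg_if_v_nonpos)
  then have "pos_sublevel (w R) \<noteq> {}" and "r2 < Sup (pos_sublevel (w R))"
    using less_Sup_pos_sublevel[OF isCont_w[OF R r2(1)] r2(1) _ bdd(3)] by auto
  with R bdd ne_u ne_v R_r1 r12 show ?thesis unfolding r1_def r2_def by blast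
qed

end

theorem lemma4p1:
  fixes n :: nat and b :: real
  assumes "n \<ge> 15" and "b > 0"
  shows "\<exists>R>0.
    {r. r > 0 \<and> u_out (real n) b R r \<le> 0} \<noteq> {} \<and> bdd_above {r. r > 0 \<and> u_out (real n) b R r \<le> 0} \<and>
    {r. r > 0 \<and> v_out (real n) b R r \<le> 0} \<noteq> {} \<and> bdd_above {r. r > 0 \<and> v_out (real n) b R r \<le> 0} \<and>
    {r. r > 0 \<and> w_out (real n) b R r \<le> 0} \<noteq> {} \<and> bdd_above {r. r > 0 \<and> w_out (real n) b R r \<le> 0} \<and>
    R < Sup {r. r > 0 \<and> u_out (real n) b R r \<le> 0} \<and>
    Sup {r. r > 0 \<and> u_out (real n) b R r \<le> 0} < Sup {r. r > 0 \<and> v_out (real n) b R r \<le> 0} \<and>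
    Sup {r. r > 0 \<and> v_out (real n) b R r \<le> 0} < Sup {r. r > 0 \<and> w_out (real n) b R r \<le> 0}"
proof -
  define x where "x = real n"
  have x: "15 \<le> x" unfolding x_def using assms(1) by simp
  define m l L where "m = mexp x" and "l = lexp x" and "L = Lconst x"
  interpret outer_profile m l L b
    using pJL6_mexp(2,3)[OF x] lexp_eq[OF x] Lconst_pos_powr(1)[OF x] assms(2)
    unfolding m_def l_def L_def by unfold_locales simp_all
  have x_l: "x = 2*l + 6" unfolding l_def lexp_eq[OF x] by (simp add: field_simps)
  have "u_out x b = u" "v_out x b = v" "w_out x b = w"
    unfolding u_out_def v_out_def w_out_def u_def[abs_def] v_def[abs_def] w_def[abs_def] Let_def
      m_def[symmetric] l_def[symmetric] L_def[symmetric]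
    by (simp_all add: x_l algebra_simps)
  with Sup_pos_sublevels_increasing show ?thesis unfolding pos_sublevel_def x_def by simp
qed

end
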